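(* Assume: (i) for each $j\in N$ there exists $x^{s,*}_j$ with $f_j(x^{s,*}_j,0)=0$; (ii) there exists at least one bus $j\in N$ such that whenever $f_j(\bar x^s_j,-\bar\omega_j)=0$ for constants $\bar x^s_j,\bar\omega_j$, then $\bar\omega_j=0$; (iii) the hybrid system $\mathcal H=(C,f,D,g)$ has an equilibrium. Then every equilibrium $z^*=(x^*,\sigma^* )$ of $\mathcal H$, with $x^*=(\eta^*,\omega^*,x^{s,*})$, satisfies $\omega^*=0_{|N|}$, $\sigma^*=0_{|N|}$ and $z^*\in C$.
   Context: Network model. $(N,E)$ is a connected directed graph with $N=\{1,\dots,|N|\}$, $E\subseteq N\times N$, with arbitrary orientation: if $(i,j)\in E$ then $(j,i)\notin E$. For $j\in N$, "$i:i\to j$" ranges over $i$ with $(i,j)\in E$ and "$k:j\to k$" over $k$ with $(j,k)\in E$. Constants: $M_j>0$, $p^L_j\in\mathbb{R}$ ($j\in N$), $B_{ij}>0$ ($(i,j)\in E$). Continuous state $x=(\eta,\omega,x^s)\in\mathbb{R}^n$ with $\eta_{ij}\in\mathbb{R}$ ($(i,j)\in E$), $\omega_j\in\mathbb{R}$, $x^s_j\in\mathbb{R}^{n_j}$ ($j\in N$), $n=|E|+|N|+\sum_jn_j$; $p_{ij}=B_{ij}\sin\eta_{ij}$, $s_j=g_j(x^s_j,-\omega_j)$, where $f_j:\mathbb{R}^{n_j}\times\mathbb{R}\to\mathbb{R}^{n_j}$, $g_j:\mathbb{R}^{n_j}\times\mathbb{R}\to\mathbb{R}$ are globally Lipschitz.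 Hysteretic loads as a hybrid system. For each $j$ constants $\overline d_j\ge0$ and thresholds $\omega^1_j>\omega^0_j>0$ are given. ${\rm sgn}(a)=1$ if $a\ge0$ and $-1$ otherwise. The discrete state is $\sigma\in P^{|N|}$, $P=\{-1,0,1\}$, and $z=(x,\sigma)$. Let $\mathcal I_j(\omega_j)=\{{\rm sgn}(\omega_j)\}$ if $|\omega_j|>\omega^1_j$, $\{0\}$ if $|\omega_j|<\omega^0_j$, $\{0,{\rm sgn}(\omega_j)\}$ if $\omega^0_j\le|\omega_j|\le\omega^1_j$; $\Lambda=C=\{z\in\mathbb{R}^n\times P^{|N|}:\sigma_j\in\mathcal I_j(\omega_j)\ \forall j\}$. Flow map $f$ on $C$: $\dot\eta_{ij}=\omega_i-\omega_j$; $M_j\dot\omega_j=-p^L_j+s_j-\overline d_j\sigma_j-\sum_{k:j\to k}p_{jk}+\sum_{i:i\to j}p_{ij}$; $\dot x^s_j=f_j(x^s_j,-\omega_j)$; $\dot\sigma_j=0$. Jump set $D$: the set of $z\in\Lambda$ such that for some $j$, either ($|\omega_j|=\omega^1_j$ and $\sigma_j=0$) or ($|\omega_j|=\omega^0_j$ and $\sigma_j={\rm sgn}(\omega_j)$). Jump map $g$ on $D$: $x^+=x$; $\sigma_j^+={\rm sgn}(\omega_j)$ if $|\omega_j|=\omega^1_j$ and $\sigma_j=0$, $\sigma_j^+=0$ if $|\omega_j|=\omega^0_j$ and $\sigma_j={\rm sgn}(\omega_j)$, $\sigma_j^+=\sigma_j$ otherwise (so $g(D)\subseteq C$). A point $z^*$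 is an equilibrium of $\mathcal H$ if $f(z^* )=0$ whenever $z^*\in C$ and $g(z^* )=z^*$ whenever $z^*\in D$. *)

theory Defs
  imports Complex_Main
begin

text \<open>A state is z = (x, sigma) with
  x = (eta, omega, xs): eta indexed by edges, omega by buses, xs j a real list
  of length nd j (the vector x^s_j in R^{n_j}); sigma j in {-1,0,1} (as int).\<close>

type_synonym cstate = "(nat \<times> nat \<Rightarrow> real) \<times> (nat \<Rightarrow> real) \<times> (nat \<Rightarrow> real list)"
type_synonym hstate = "cstate \<times> (nat \<Rightarrow> int)"

definition buses :: "nat \<Rightarrow> nat set" where
  "buses nb = {1..nb}"

definition network_graph :: "nat \<Rightarrow> (nat \<times> nat) set \<Rightarrow> bool" where
  "network_graph nb E \<longleftrightarrow>
     E \<subseteq> buses nb \<times> buses nb \<and>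
     (\<forall>i j. (i, j) \<in> E \<longrightarrow> (j, i) \<notin> E) \<and>
     (\<forall>i\<in>buses nb. \<forall>j\<in>buses nb. (i, j) \<in> (E \<union> E\<inverse>)\<^sup>*)"

definition ldist :: "real list \<Rightarrow> real list \<Rightarrow> real" where
  "ldist u v = sqrt (\<Sum>i<length u. (u ! i - v ! i)\<^sup>2)"

definition lipschitz_vec :: "nat \<Rightarrow> (real list \<Rightarrow> real \<Rightarrow> real list) \<Rightarrow> bool" where
  "lipschitz_vec m F \<longleftrightarrow> (\<exists>L. \<forall>x y w v. length x = m \<longrightarrow> length y = m \<longrightarrow>
      ldist (F x w) (F y v) \<le> L * sqrt ((ldist x y)\<^sup>2 + (w - v)\<^sup>2))"

definition lipschitz_scal :: "nat \<Rightarrow> (real list \<Rightarrow> real \<Rightarrow> real) \<Rightarrow> bool" where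
  "lipschitz_scal m G \<longleftrightarrow> (\<exists>L. \<forall>x y w v. length x = m \<longrightarrow> length y = m \<longrightarrow>
      \<bar>G x w - G y v\<bar> \<le> L * sqrt ((ldist x y)\<^sup>2 + (w - v)\<^sup>2))"

text \<open>sgn as in the paper: 1 if a >= 0, -1 otherwise.\<close>
definition sgnH :: "real \<Rightarrow> int" where
  "sgnH a = (if a \<ge> 0 then 1 else -1)"

definition Ihyst :: "real \<Rightarrow> real \<Rightarrow> real \<Rightarrow> int set" where
  "Ihyst w0 w1 w =
     (if \<bar>w\<bar> > w1 then {sgnH w}
      else if \<bar>w\<bar> < w0 then {0}
      else {0, sgnH w})"

definition flowset :: "nat \<Rightarrow> (nat \<Rightarrow> nat) \<Rightarrow> (nat \<Rightarrow> real) \<Rightarrow> (nat \<Rightarrow> real) \<Rightarrow> hstate set" where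
  "flowset nb nd w0 w1 = {((eta, omega, xs), sigma).
      \<forall>j\<in>buses nb. length (xs j) = nd j \<and> sigma j \<in> Ihyst (w0 j) (w1 j) (omega j)}"

definition jumpset :: "nat \<Rightarrow> (nat \<Rightarrow> nat) \<Rightarrow> (nat \<Rightarrow> real) \<Rightarrow> (nat \<Rightarrow> real) \<Rightarrow> hstate set" where
  "jumpset nb nd w0 w1 = {((eta, omega, xs), sigma). ((eta, omega, xs), sigma) \<in> flowset nb nd w0 w1 \<and>
      (\<exists>j\<in>buses nb. (\<bar>omega j\<bar> = w1 j \<and> sigma j = 0) \<or>
                     (\<bar>omega j\<bar> = w0 j \<and> sigma j = sgnH (omega j)))}"

definition jumpmap :: "nat \<Rightarrow> (nat \<Rightarrow> real) \<Rightarrow> (nat \<Rightarrow> real) \<Rightarrow> hstate \<Rightarrow> hstate" where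
  "jumpmap nb w0 w1 z = (case z of ((eta, omega, xs), sigma) \<Rightarrow>
     ((eta, omega, xs), (\<lambda>j. if j \<in> buses nb then
         (if \<bar>omega j\<bar> = w1 j \<and> sigma j = 0 then sgnH (omega j)
          else if \<bar>omega j\<bar> = w0 j \<and> sigma j = sgnH (omega j) then 0
          else sigma j)
       else sigma j)))"

definition flowmap ::
  "nat \<Rightarrow> (nat \<times> nat) set \<Rightarrow> (nat \<Rightarrow> real) \<Rightarrow> (nat \<Rightarrow> real) \<Rightarrow> (nat \<times> nat \<Rightarrow> real)
   \<Rightarrow> (nat \<Rightarrow> real list \<Rightarrow> real \<Rightarrow> real list) \<Rightarrow> (nat \<Rightarrow> real list \<Rightarrow> real \<Rightarrow> real)
   \<Rightarrow> (nat \<Rightarrow> real) \<Rightarrow> hstate \<Rightarrow> hstate" where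
  "flowmap nb E M pL B fs gs dbar z = (case z of ((eta, omega, xs), sigma) \<Rightarrow>
     ((\<lambda>e. if e \<in> E then omega (fst e) - omega (snd e) else 0,
       \<lambda>j. if j \<in> buses nb then
             (- pL j + gs j (xs j) (- omega j) - dbar j * real_of_int (sigma j)
              - (\<Sum>k\<in>{k. (j, k) \<in> E}. B (j, k) * sin (eta (j, k)))
              + (\<Sum>i\<in>{i. (i, j) \<in> E}. B (i, j) * sin (eta (i, j)))) / M j
           else 0,
       \<lambda>j. if j \<in> buses nb then fs j (xs j) (- omega j) else []),
      \<lambda>j. 0))"

definition flowzero :: "nat \<Rightarrow> (nat \<Rightarrow> nat) \<Rightarrow> hstate" where
  "flowzero nb nd = ((\<lambda>e. 0, \<lambda>j. 0, \<lambda>j. if j \<in> buses nb then replicate (nd j) 0 else []), \<lambda>j. 0)"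

definition is_equilibrium ::
  "nat \<Rightarrow> (nat \<times> nat) set \<Rightarrow> (nat \<Rightarrow> real) \<Rightarrow> (nat \<Rightarrow> real) \<Rightarrow> (nat \<times> nat \<Rightarrow> real)
   \<Rightarrow> (nat \<Rightarrow> nat) \<Rightarrow> (nat \<Rightarrow> real list \<Rightarrow> real \<Rightarrow> real list) \<Rightarrow> (nat \<Rightarrow> real list \<Rightarrow> real \<Rightarrow> real)
   \<Rightarrow> (nat \<Rightarrow> real) \<Rightarrow> (nat \<Rightarrow> real) \<Rightarrow> (nat \<Rightarrow> real) \<Rightarrow> hstate \<Rightarrow> bool" where
  "is_equilibrium nb E M pL B nd fs gs dbar w0 w1 z \<longleftrightarrow>
     (z \<in> flowset nb nd w0 w1 \<or> z \<in> jumpset nb nd w0 w1) \<and>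
     (z \<in> flowset nb nd w0 w1 \<longrightarrow> flowmap nb E M pL B fs gs dbar z = flowzero nb nd) \<and>
     (z \<in> jumpset nb nd w0 w1 \<longrightarrow> jumpmap nb w0 w1 z = z)"

end

theory Submission
  imports Defs
begin

text \<open>Jumps only occur inside C, so every equilibrium lies in C and the flow vanishes there.
  A vanishing flow forces equal frequencies across every line, hence (the graph being
  connected) a common frequency, which the bus of assumption (ii) pins to zero. At zero
  frequency the hysteresis admits only the load state 0.\<close>

lemma jumpset_subset_flowset: "jumpset nb nd w0 w1 \<subseteq> flowset nb nd w0 w1"
  unfolding jumpset_def by auto

lemma equilibrium_in_flowset:
  assumes "is_equilibrium nb E M pL B nd fs gs dbar w0 w1 z"
  shows "z \<in> flowset nb nd w0 w1"
  using assms jumpset_subset_flowset unfolding is_equilibrium_def by blast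

lemma equilibrium_flowmap_eq_zero:
  assumes "is_equilibrium nb E M pL B nd fs gs dbar w0 w1 z"
  shows "flowmap nb E M pL B fs gs dbar z = flowzero nb nd"
  using assms equilibrium_in_flowset[OF assms] unfolding is_equilibrium_def by blast

lemma flowmap_eq_zero_edge:
  assumes "flowmap nb E M pL B fs gs dbar ((eta, omega, xs), sigma) = flowzero nb nd"
    and "(a, b) \<in> E"
  shows "omega a = omega b"
proof -
  have "(\<lambda>e. if e \<in> E then omega (fst e) - omega (snd e) else 0) = (\<lambda>e. 0)"
    using arg_cong[OF assms(1), of "\<lambda>z. fst (fst z)"] by (simp add: flowmap_def flowzero_def)
  then show ?thesis
    using fun_cong[of _ _ "(a, b)"] assms(2) by fastforce
qed

lemma flowmap_eq_zero_fs:
  assumes "flowmap nb E M pL B fs gs dbar ((eta, omega, xs), sigma) = flowzero nb nd"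
    and "j \<in> buses nb"
  shows "fs j (xs j) (- omega j) = replicate (nd j) 0"
proof -
  have "(\<lambda>j. if j \<in> buses nb then fs j (xs j) (- omega j) else []) =
        (\<lambda>j. if j \<in> buses nb then replicate (nd j) 0 else [])"
    using arg_cong[OF assms(1), of "\<lambda>z. snd (snd (fst z))"]
    by (simp add: flowmap_def flowzero_def)
  then show ?thesis
    using fun_cong[of _ _ j] assms(2) by fastforce
qed

lemma edge_invariant_rtrancl_symcl:
  assumes "\<And>a b. (a, b) \<in> E \<Longrightarrow> h a = h b"
    and "(i, j) \<in> (E \<union> E\<inverse>)\<^sup>*"
  shows "h i = h j"
  using assms(2)
proof (induction rule: rtrancl_induct)
  case base
  then show ?case by simp
next
  case (step y z)
  then show ?case using assms(1) by auto
qed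

lemma network_graph_constant:
  assumes "network_graph nb E"
    and "\<And>a b. (a, b) \<in> E \<Longrightarrow> h a = h b"
    and "i \<in> buses nb" and "j \<in> buses nb"
  shows "h i = h j"
  using assms edge_invariant_rtrancl_symcl[of E h i j] unfolding network_graph_def by blast

lemma Ihyst_zero: "0 < w0 \<Longrightarrow> w0 < w1 \<Longrightarrow> Ihyst w0 w1 0 = {0}"
  unfolding Ihyst_def by simp

theorem lemma3:
  fixes nb :: nat and E :: "(nat \<times> nat) set"
    and M pL dbar w0 w1 :: "nat \<Rightarrow> real" and B :: "nat \<times> nat \<Rightarrow> real"
    and nd :: "nat \<Rightarrow> nat"
    and fs :: "nat \<Rightarrow> real list \<Rightarrow> real \<Rightarrow> real list"
    and gs :: "nat \<Rightarrow> real list \<Rightarrow> real \<Rightarrow> real"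
  assumes graph: "network_graph nb E"
    and M_pos: "\<forall>j\<in>buses nb. M j > 0"
    and B_pos: "\<forall>e\<in>E. B e > 0"
    and f_dim: "\<forall>j\<in>buses nb. \<forall>x w. length x = nd j \<longrightarrow> length (fs j x w) = nd j"
    and f_lip: "\<forall>j\<in>buses nb. lipschitz_vec (nd j) (fs j)"
    and g_lip: "\<forall>j\<in>buses nb. lipschitz_scal (nd j) (gs j)"
    and dbar_nonneg: "\<forall>j\<in>buses nb. dbar j \<ge> 0"
    and thresholds: "\<forall>j\<in>buses nb. 0 < w0 j \<and> w0 j < w1 j"
    and A1: "\<forall>j\<in>buses nb. \<exists>x. length x = nd j \<and> fs j x 0 = replicate (nd j) 0"
    and A2: "\<exists>j\<in>buses nb. \<forall>xb wb. length xb = nd j \<longrightarrow>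
               fs j xb (- wb) = replicate (nd j) 0 \<longrightarrow> wb = 0"
    and A3: "\<exists>z. is_equilibrium nb E M pL B nd fs gs dbar w0 w1 z"
  shows "\<forall>eta omega xs sigma.
           is_equilibrium nb E M pL B nd fs gs dbar w0 w1 ((eta, omega, xs), sigma) \<longrightarrow>
           (\<forall>j\<in>buses nb. omega j = 0) \<and> (\<forall>j\<in>buses nb. sigma j = 0) \<and>
           ((eta, omega, xs), sigma) \<in> flowset nb nd w0 w1"
proof (intro allI impI)
  fix eta omega xs sigma
  assume eq: "is_equilibrium nb E M pL B nd fs gs dbar w0 w1 ((eta, omega, xs), sigma)"
  let ?z = "((eta, omega, xs), sigma)"
  have inC: "?z \<in> flowset nb nd w0 w1"
    using equilibrium_in_flowset[OF eq] .
  note zero_flow = equilibrium_flowmap_eq_zero[OF eq]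
  obtain j0 where j0: "j0 \<in> buses nb" and damped: "\<forall>xb wb. length xb = nd j0 \<longrightarrow>
      fs j0 xb (- wb) = replicate (nd j0) 0 \<longrightarrow> wb = 0"
    using A2 by blast
  have "omega j0 = 0"
    using damped flowmap_eq_zero_fs[OF zero_flow j0] inC j0 unfolding flowset_def by auto
  then have omega_zero: "\<forall>j\<in>buses nb. omega j = 0"
    using network_graph_constant[OF graph, of omega, OF flowmap_eq_zero_edge[OF zero_flow] j0]
    by metis
  have "\<forall>j\<in>buses nb. sigma j = 0"
    using inC omega_zero thresholds Ihyst_zero unfolding flowset_def by fastforce
  with omega_zero inC show "(\<forall>j\<in>buses nb. omega j = 0) \<and> (\<forall>j\<in>buses nb. sigma j = 0) \<and>
      ?z \<in> flowset nb nd w0 w1" by blast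
qed

end
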